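(* Let $\gamma\in(0,1)$, $c\in\mathbb{R}$, $\sigma^2>0$, and $\alpha_0\in(0,1]$. Define recursively, for $n\ge2$, $$\alpha_{n-1}=\frac{(1-\gamma)\lambda^{n-1}\sigma^2+\big(1-(1-\gamma)\delta^{n-1}\big)^2c^2}{(1-\gamma)^2\lambda^{n-1}\sigma^2+\big(1-(1-\gamma)\delta^{n-1}\big)^2c^2+\sigma^2},$$ where $\delta^1=\alpha_0$, $\lambda^1=\alpha_0^2$, and for $m>1$, $\delta^m=\alpha_{m-1}+(1-(1-\gamma)\alpha_{m-1})\delta^{m-1}$, $\lambda^m=\alpha_{m-1}^2+(1-(1-\gamma)\alpha_{m-1})^2\lambda^{m-1}$. Then $\lim_{n\to\infty}\alpha_{n-1}=0$.
   Context: The formula for $\alpha_{n-1}$ is the prediction-error-minimizing stepsize for approximate value iteration in a single-state, single-action problem with i.i.d. rewards of mean $c$, variance $\sigma^2$, and discount factor $\gamma$. *)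

theory Defs
  imports Complex_Main
begin

text \<open>vi_state g c s2 a0 k = (alpha_k, delta^(k+1), lambda^(k+1)), where s2 = sigma^2.\<close>
primrec vi_state :: "real \<Rightarrow> real \<Rightarrow> real \<Rightarrow> real \<Rightarrow> nat \<Rightarrow> real \<times> real \<times> real" where
  "vi_state g c s2 a0 0 = (a0, a0, a0^2)"
| "vi_state g c s2 a0 (Suc k) =
     (let (a, d, l) = vi_state g c s2 a0 k;
          a' = ((1 - g) * l * s2 + (1 - (1 - g) * d)^2 * c^2) /
               ((1 - g)^2 * l * s2 + (1 - (1 - g) * d)^2 * c^2 + s2)
      in (a', a' + (1 - (1 - g) * a') * d, a'^2 + (1 - (1 - g) * a')^2 * l))"

definition alpha :: "real \<Rightarrow> real \<Rightarrow> real \<Rightarrow> real \<Rightarrow> nat \<Rightarrow> real" where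
  "alpha g c s2 a0 k = fst (vi_state g c s2 a0 k)"

definition delta :: "real \<Rightarrow> real \<Rightarrow> real \<Rightarrow> real \<Rightarrow> nat \<Rightarrow> real" where
  "delta g c s2 a0 m = fst (snd (vi_state g c s2 a0 (m - 1)))"

definition lam :: "real \<Rightarrow> real \<Rightarrow> real \<Rightarrow> real \<Rightarrow> nat \<Rightarrow> real" where
  "lam g c s2 a0 m = snd (snd (vi_state g c s2 a0 (m - 1)))"

end

theory Submission
  imports Defs
begin

text \<open>With \<open>b = 1 - \<gamma>\<close>, \<open>X = \<sigma>\<^sup>2 \<lambda>\<close> and \<open>Y = (1 - b \<delta>)\<^sup>2 c\<^sup>2\<close>, the stepsize is
  \<open>\<alpha> = (b X + Y) / D\<close> with \<open>D = b\<^sup>2 X + Y + \<sigma>\<^sup>2\<close>, and the update rules for \<open>\<delta>, \<lambda>\<close> turn into the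
  exact identity \<open>\<alpha>' = \<alpha> - b \<sigma>\<^sup>2 \<alpha>\<^sup>2 / D'\<close>. So the stepsizes decrease, and since \<open>\<alpha> \<le> 1\<close> keeps
  \<open>X\<close> (hence \<open>D\<close>) bounded, each step removes at least a fixed multiple of \<open>\<alpha>\<^sup>2\<close>; a
  nonnegative sequence with that property tends to zero.\<close>

lemma tendsto_zero_of_quadratic_decrease:
  fixes a :: "nat \<Rightarrow> real" and c :: real
  assumes "0 < c" and nonneg: "\<And>n. 0 \<le> a n"
    and decrease: "\<And>n. a (Suc n) \<le> a n - c * (a n)\<^sup>2"
  shows "a \<longlonglongrightarrow> 0"
proof -
  have "decseq a"
    using decrease \<open>0 < c\<close> by (intro decseq_SucI) (smt (verit) mult_nonneg_nonneg zero_le_power2)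
  then obtain L where L: "a \<longlonglongrightarrow> L"
    using nonneg by (metis decseq_convergent)
  have "(\<lambda>n. a (Suc n)) \<longlonglongrightarrow> L"
    using L by (rule LIMSEQ_Suc)
  moreover have "(\<lambda>n. a n - c * (a n)\<^sup>2) \<longlonglongrightarrow> L - c * L\<^sup>2"
    by (intro tendsto_intros L)
  ultimately have "L \<le> L - c * L\<^sup>2"
    by (rule LIMSEQ_le) (use decrease in auto)
  then have "L = 0"
    using \<open>0 < c\<close> by (smt (verit) mult_pos_pos zero_less_power2)
  then show ?thesis
    using L by simp
qed

locale stepsize_recursion =
  fixes b s :: real and A X Y :: "nat \<Rightarrow> real"
  assumes b_pos: "0 < b" and b_less_1: "b < 1" and s_pos: "0 < s"
    and X_0_pos: "0 < X 0" and Y_0_nonneg: "0 \<le> Y 0"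
    and X_0_bound: "b * (1 - b) * X 0 \<le> s"
    and A_Suc: "\<And>k. A (Suc k) = (b * X k + Y k) / (b\<^sup>2 * X k + Y k + s)"
    and X_Suc: "\<And>k. X (Suc k) = s * (A (Suc k))\<^sup>2 + (1 - b * A (Suc k))\<^sup>2 * X k"
    and Y_Suc: "\<And>k. Y (Suc k) = (1 - b * A (Suc k))\<^sup>2 * Y k"
begin

definition denom :: "nat \<Rightarrow> real" where
  "denom k = b\<^sup>2 * X k + Y k + s"

lemma Y_nonneg: "0 \<le> Y k"
  by (induction k) (simp_all add: Y_0_nonneg Y_Suc)

lemma X_pos: "0 < X k"
proof (induction k)
  case 0
  show ?case by (rule X_0_pos)
next
  case (Suc k)
  have "0 < A (Suc k)"
    unfolding A_Suc using Suc Y_nonneg[of k] b_pos s_pos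
    by (intro divide_pos_pos add_pos_nonneg) auto
  then show ?case
    unfolding X_Suc using Suc s_pos by (intro add_pos_nonneg) auto
qed

lemma denom_pos: "0 < denom k"
  unfolding denom_def using X_pos[of k] Y_nonneg[of k] s_pos by (simp add: add_nonneg_pos)

lemma A_Suc_pos: "0 < A (Suc k)"
  unfolding A_Suc using X_pos[of k] Y_nonneg[of k] b_pos s_pos
  by (intro divide_pos_pos add_pos_nonneg) auto

lemma A_Suc_eq: "A (Suc k) = (b * X k + Y k) / denom k"
  by (simp add: A_Suc denom_def)

lemma A_Suc_times_denom: "A (Suc k) * denom k = b * X k + Y k"
  using denom_pos[of k] by (simp add: A_Suc_eq)

lemma A_Suc_le_1_iff: "A (Suc k) \<le> 1 \<longleftrightarrow> b * (1 - b) * X k \<le> s"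
  using denom_pos[of k] unfolding A_Suc_eq
  by (simp add: divide_le_eq_1_pos denom_def algebra_simps power2_eq_square)

lemma A_Suc_Suc: "A (Suc (Suc k)) = A (Suc k) - b * s * (A (Suc k))\<^sup>2 / denom (Suc k)"
proof -
  let ?a = "A (Suc k)"
  have "?a * s = b * X k * (1 - b * ?a) + Y k * (1 - ?a)"
    using A_Suc_times_denom[of k] unfolding denom_def by (simp add: algebra_simps power2_eq_square)
  then have "b * X (Suc k) + Y (Suc k) = ?a * denom (Suc k) - b * s * ?a\<^sup>2"
    unfolding denom_def X_Suc Y_Suc by algebra
  then show ?thesis
    using A_Suc_times_denom[of "Suc k"] denom_pos[of "Suc k"] by (simp add: field_simps)
qed

lemma A_Suc_le_1: "A (Suc k) \<le> 1"
proof (induction k)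
  case 0
  show ?case
    using X_0_bound by (simp add: A_Suc_le_1_iff)
next
  case (Suc k)
  have "0 \<le> b * s * (A (Suc k))\<^sup>2 / denom (Suc k)"
    using b_pos s_pos denom_pos[of "Suc k"] by simp
  then show ?case
    using A_Suc_Suc[of k] Suc by simp
qed

lemma Y_le_Y_0: "Y k \<le> Y 0"
proof (induction k)
  case (Suc k)
  have "(1 - b * A (Suc k))\<^sup>2 \<le> 1"
    using A_Suc_pos[of k] A_Suc_le_1[of k] b_pos b_less_1
    by (intro power_le_one) (auto simp: mult_le_one)
  then have "Y (Suc k) \<le> Y k"
    unfolding Y_Suc using Y_nonneg[of k] by (simp add: mult_left_le_one_le)
  then show ?case using Suc by simp
qed simp

lemma X_le: "X k \<le> s / (b * (1 - b))"
  using A_Suc_le_1[of k] b_pos b_less_1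
  by (simp add: A_Suc_le_1_iff pos_le_divide_eq mult.commute)

lemma denom_le: "denom k \<le> b\<^sup>2 * (s / (b * (1 - b))) + Y 0 + s"
proof -
  have "b\<^sup>2 * X k \<le> b\<^sup>2 * (s / (b * (1 - b)))"
    by (rule mult_left_mono[OF X_le]) simp
  then show ?thesis
    unfolding denom_def using Y_le_Y_0[of k] by linarith
qed

theorem A_Suc_tendsto_0: "(\<lambda>k. A (Suc k)) \<longlonglongrightarrow> 0"
proof (rule tendsto_zero_of_quadratic_decrease)
  define M where "M = b\<^sup>2 * (s / (b * (1 - b))) + Y 0 + s"
  have M_pos: "0 < M"
    using denom_pos[of 0] denom_le[of 0] unfolding M_def by linarith
  show "0 < b * s / M"
    using b_pos s_pos M_pos by simp
  show "0 \<le> A (Suc k)" for k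
    using A_Suc_pos[of k] by simp
  show "A (Suc (Suc k)) \<le> A (Suc k) - b * s / M * (A (Suc k))\<^sup>2" for k
  proof -
    have "b * s * (A (Suc k))\<^sup>2 / M \<le> b * s * (A (Suc k))\<^sup>2 / denom (Suc k)"
      using denom_pos[of "Suc k"] denom_le[of "Suc k"] b_pos s_pos
      unfolding M_def by (intro divide_left_mono) auto
    then show ?thesis
      using A_Suc_Suc[of k] by simp
  qed
qed

end

lemma vi_state_Suc_eq:
  assumes "snd (vi_state g c s2 a0 k) = (d, l)"
  defines "a \<equiv> alpha g c s2 a0 (Suc k)"
  shows "a = ((1 - g) * l * s2 + (1 - (1 - g) * d)\<^sup>2 * c\<^sup>2)
               / ((1 - g)\<^sup>2 * l * s2 + (1 - (1 - g) * d)\<^sup>2 * c\<^sup>2 + s2)"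
    and "snd (vi_state g c s2 a0 (Suc k)) = (a + (1 - (1 - g) * a) * d, a\<^sup>2 + (1 - (1 - g) * a)\<^sup>2 * l)"
  using assms by (cases "vi_state g c s2 a0 k"; simp add: alpha_def Let_def)+

lemma stepsize_recursion_vi_state:
  fixes g c s2 a0 :: real
  assumes "0 < g" "g < 1" "0 < s2" "0 < a0" "a0 \<le> 1"
  shows "stepsize_recursion (1 - g) s2 (alpha g c s2 a0)
           (\<lambda>k. s2 * snd (snd (vi_state g c s2 a0 k)))
           (\<lambda>k. (1 - (1 - g) * fst (snd (vi_state g c s2 a0 k)))\<^sup>2 * c\<^sup>2)"
proof
  have "g * (1 - g) * a0\<^sup>2 \<le> 1"
    using assms by (intro mult_le_one) (auto simp: power_le_one)
  then show "(1 - g) * (1 - (1 - g)) * (s2 * snd (snd (vi_state g c s2 a0 0))) \<le> s2"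
    using assms mult_right_mono[of "g * (1 - g) * a0\<^sup>2" 1 s2] by (simp add: algebra_simps)
  fix k
  obtain d l where dl: "snd (vi_state g c s2 a0 k) = (d, l)"
    by fastforce
  note step = vi_state_Suc_eq[OF dl]
  show "alpha g c s2 a0 (Suc k) =
          ((1 - g) * (s2 * snd (snd (vi_state g c s2 a0 k)))
             + (1 - (1 - g) * fst (snd (vi_state g c s2 a0 k)))\<^sup>2 * c\<^sup>2)
        / ((1 - g)\<^sup>2 * (s2 * snd (snd (vi_state g c s2 a0 k)))
             + (1 - (1 - g) * fst (snd (vi_state g c s2 a0 k)))\<^sup>2 * c\<^sup>2 + s2)"
    using step(1) dl by (simp add: mult_ac)
  show "s2 * snd (snd (vi_state g c s2 a0 (Suc k))) =
          s2 * (alpha g c s2 a0 (Suc k))\<^sup>2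
          + (1 - (1 - g) * alpha g c s2 a0 (Suc k))\<^sup>2 * (s2 * snd (snd (vi_state g c s2 a0 k)))"
    using step(2) dl by (simp add: algebra_simps)
  show "(1 - (1 - g) * fst (snd (vi_state g c s2 a0 (Suc k))))\<^sup>2 * c\<^sup>2 =
          (1 - (1 - g) * alpha g c s2 a0 (Suc k))\<^sup>2
          * ((1 - (1 - g) * fst (snd (vi_state g c s2 a0 k)))\<^sup>2 * c\<^sup>2)"
  proof -
    have "1 - (1 - g) * fst (snd (vi_state g c s2 a0 (Suc k)))
            = (1 - (1 - g) * alpha g c s2 a0 (Suc k)) * (1 - (1 - g) * d)"
      using step(2) by (simp add: algebra_simps)
    then show ?thesis
      using dl by (simp add: power_mult_distrib)
  qed
qed (use assms in simp_all)

theorem theorem4: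
  fixes g c s2 a0 :: real
  assumes "0 < g" "g < 1" "0 < s2" "0 < a0" "a0 \<le> 1"
  shows "(\<lambda>n. alpha g c s2 a0 (n - 1)) \<longlonglongrightarrow> 0"
proof -
  interpret stepsize_recursion "1 - g" s2 "alpha g c s2 a0"
      "\<lambda>k. s2 * snd (snd (vi_state g c s2 a0 k))"
      "\<lambda>k. (1 - (1 - g) * fst (snd (vi_state g c s2 a0 k)))\<^sup>2 * c\<^sup>2"
    using stepsize_recursion_vi_state[OF assms] .
  have "(\<lambda>n. alpha g c s2 a0 (Suc n - 1)) \<longlonglongrightarrow> 0"
    using A_Suc_tendsto_0 filterlim_sequentially_Suc by auto
  then show ?thesis
    by (rule filterlim_sequentially_Suc[THEN iffD1])
qed

end
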